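(* Let $m\ge0$ be an integer, $s\in(0,1]$, $x,y\in\mathbb{R}$. For $N\ge1$ let $n_1=Ns$, $z_1=-2Ns-x\sqrt{2N}$, $z_2=-\sqrt{2N}\,y$ (rounded to integers). Then $\sqrt{2N}\,S^*_{m,-n_1}(z_1,z_2)\sim (N/2)^{m/2}S_{-m,-s}(x,y)$ as $N\to\infty$, i.e. $\sqrt{2N}(N/2)^{-m/2}S^*_{m,-n_1}(z_1,z_2)\to S_{-m,-s}(x,y)$.
   Context: With $\phi(w)=\frac{w}{2w-1}$ (i.e. $\phi(w)=(1-q)w/(w-q)$ with $q=1/2$) and $r\in(1/2,1)$, for integers $n$: $S^*_{m,-n}(z_1,z_2)=\frac{1}{2\pi\mathbf{i}}\oint_{|w|=r}\frac{2^{-(z_1-z_2)}}{w^{z_1-z_2+n+1}}(1-w)^n\phi(w)^m\,dw$. For $t<0$ and $k\in\mathbb{Z}$, $S_{k,t}(x,y)=\frac{1}{2\pi\mathbf{i}}\oint_\Gamma e^{\frac t2 z^2+(x-y)z}z^k\,dz$, where for some $0<\theta<\pi/4$, $d>0$, $\Gamma=\{d+e^{\mathbf{i}\theta}u:u\in(-\infty,0]\}\cup\{d-e^{-\mathbf{i}\theta}u:u\in[0,\infty)\}$ (traversed in the order of $u$). *)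

theory Defs
  imports "HOL-Complex_Analysis.Complex_Analysis"
begin

text \<open>phi(w) = w/(2w-1), i.e. (1-q)w/(w-q) with q = 1/2.\<close>
definition phi :: "complex \<Rightarrow> complex" where
  "phi w = w / (2 * w - 1)"

definition Sstar :: "real \<Rightarrow> nat \<Rightarrow> int \<Rightarrow> int \<Rightarrow> int \<Rightarrow> complex" where
  "Sstar r m k z1 z2 =
     contour_integral (circlepath 0 r)
       (\<lambda>w. (2::complex) powi (-(z1 - z2)) / w powi (z1 - z2 + (-k) + 1)
              * (1 - w) powi (-k) * phi w ^ m) / (2 * of_real pi * \<i>)"

definition Skernel :: "int \<Rightarrow> real \<Rightarrow> real \<Rightarrow> real \<Rightarrow> complex \<Rightarrow> complex" where
  "Skernel k t x y z = exp (of_real t / 2 * z ^ 2 + of_real (x - y) * z) * z powi k"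

text \<open>S_{k,t}(x,y) for t < 0: integral over the contour
  Gamma = {d + e^{i theta} u : u \<in> (-inf,0]} \<union> {d - e^{-i theta} u : u \<in> [0,inf)},
  traversed in the order of u, written via the parametrisations of the two rays.\<close>
definition Scont :: "real \<Rightarrow> real \<Rightarrow> int \<Rightarrow> real \<Rightarrow> real \<Rightarrow> real \<Rightarrow> complex" where
  "Scont \<theta> d k t x y =
     (integral {..0::real} (\<lambda>u. Skernel k t x y (of_real d + cis \<theta> * of_real u) * cis \<theta>)
      + integral {0::real..} (\<lambda>u. Skernel k t x y (of_real d - cis (-\<theta>) * of_real u) * (- cis (-\<theta>))))
     / (2 * of_real pi * \<i>)"

end

theory Submission
  imports Defs "HOL-Real_Asymp.Real_Asymp"
begin

text \<open>
  Both sides are evaluated exactly as residues.  Inside the circle |w| = r the integrand of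
  S* has a single pole, of order m, at w = 1/2.  After the substitution u = 2w - 1 its residue
  is 2^(-m) times the coefficient of u^(m-1) in (1 + u)^(n+q) (1 - u)^n = (1 - u^2)^n (1 + u)^q,
  where n ~ N s and q ~ (x - y) sqrt(2N).  Rescaling u by sqrt(2N), the coefficients of
  (1 - u^2)^n and (1 + u)^q converge to those of exp(-s u^2/2) and exp((x - y) u).
  On the other side, the Gaussian factor decays in the sector to the left of the contour,
  so the contour can be closed there: S_{-m,-s}(x, y) is the residue at 0 of
  exp(-s z^2/2 + (x - y) z) / z^m, which is the coefficient of z^(m-1) in the same product
  of exponential series.
\<close>

unbundle no vec_syntax

section \<open>S* as a Taylor coefficient\<close>

lemma fps_nth_one_minus_X2_power:
  "((1 - fps_X\<^sup>2 :: 'a::field_char_0 fps) ^ n) $ k =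
     (if even k then (-1) ^ (k div 2) * of_nat (n choose (k div 2)) else 0)"
proof -
  have "(1 - fps_X :: 'a fps) = (1 + fps_X) oo - fps_X"
    by (simp add: fps_compose_add_distrib)
  hence "(1 - fps_X :: 'a fps) ^ n = fps_binomial (of_nat n) oo - fps_X"
    by (simp add: fps_binomial_of_nat fps_compose_power)
  hence "((1 - fps_X :: 'a fps) ^ n) $ i = (-1) ^ i * of_nat (n choose i)" for i
    by (simp add: fps_compose_uminus' binomial_gbinomial)
  moreover have "(1 - fps_X\<^sup>2 :: 'a fps) = (1 - fps_X) oo fps_X\<^sup>2"
    by (simp add: fps_compose_sub_distrib)
  hence "(1 - fps_X\<^sup>2 :: 'a fps) ^ n = (1 - fps_X) ^ n oo fps_X\<^sup>2"
    by (simp add: fps_compose_power)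
  ultimately show ?thesis
    by (simp add: fps_nth_compose_X_power)
qed

lemma fps_one_plus_X_power_times_one_minus_X_power:
  fixes P n :: nat and q :: int
  assumes "int P = int n + q"
  shows "(1 + fps_X :: 'a::field_char_0 fps) ^ P * (1 - fps_X) ^ n
           = (1 - fps_X\<^sup>2) ^ n * fps_binomial (of_int q)"
proof -
  have "(of_nat P :: 'a) = of_nat n + of_int q"
    using assms by (metis of_int_add of_int_of_nat_eq)
  hence "(1 + fps_X :: 'a fps) ^ P = (1 + fps_X) ^ n * fps_binomial (of_int q)"
    by (simp flip: fps_binomial_of_nat add: fps_binomial_add_mult)
  moreover have "(1 + fps_X :: 'a fps) * (1 - fps_X) = 1 - fps_X\<^sup>2"
    by (simp add: algebra_simps power2_eq_square)
  ultimately show ?thesis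
    by (metis (no_types, lifting) mult.commute mult.left_commute power_mult_distrib)
qed

lemma Sstar_integrand_eq:
  fixes Z :: int and n E m :: nat and w :: complex
  assumes "Z + int n + 1 = - int E"
  shows "2 powi (- Z) / w powi (Z + int n + 1) * (1 - w) powi (int n) * phi w ^ m
       = 2 powi (1 - 2 * int m) * (1 + (2 * w + -1)) ^ (E + m) * (1 - (2 * w + -1)) ^ n
           / (w - 1/2) ^ m"
proof -
  have "- Z = (1 - 2 * int m) + int (E + m) + int n + int m"
    using assms by simp
  moreover have "(2::complex) powi (a + b) = 2 powi a * 2 powi b" for a b
    by (simp add: power_int_add)
  ultimately have two: "(2::complex) powi (- Z)
      = 2 powi (1 - 2 * int m) * 2 ^ (E + m) * 2 ^ n * 2 ^ m"
    by (simp only: power_int_of_nat)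
  have w: "w powi (Z + int n + 1) = inverse (w ^ E)"
    using assms by (simp add: power_int_minus)
  have phi: "phi w ^ m = w ^ m / (2 ^ m * (w - 1/2) ^ m)"
    by (simp add: phi_def power_divide flip: power_mult_distrib)
  have shift: "1 + (2 * w + -1) = 2 * w" "1 - (2 * w + -1) = 2 * (1 - w)"
    by simp_all
  show ?thesis
    unfolding two w phi shift power_mult_distrib by (simp add: power_add field_simps)
qed

lemma contour_integral_circlepath_eq_fps_nth:
  fixes g :: "complex \<Rightarrow> complex"
  assumes holo: "g holomorphic_on UNIV" and G: "g has_fps_expansion G" and r: "1/2 < r"
  shows "contour_integral (circlepath 0 r) (\<lambda>w. g (2 * w + -1) / (w - 1/2) ^ Suc j)
           = 2 * pi * \<i> * 2 ^ j * G $ j"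
proof -
  have affine_holo: "(\<lambda>w. g (2 * w + -1)) holomorphic_on UNIV"
    by (rule holomorphic_on_compose[of "\<lambda>w. 2 * w + -1" UNIV g, unfolded o_def])
       (intro holomorphic_intros, rule holomorphic_on_subset[OF holo], simp)
  have "((\<lambda>w. g (2 * w + -1) / (w - 1/2) ^ Suc j) has_contour_integral
           (2 * pi * \<i>) / fact j * (deriv ^^ j) (\<lambda>w. g (2 * w + -1)) (1/2)) (circlepath 0 r)"
    by (intro Cauchy_has_contour_integral_higher_derivative_circlepath
          holomorphic_on_imp_continuous_on holomorphic_on_subset[OF affine_holo])
       (use r in auto)
  moreover have "(deriv ^^ j) (\<lambda>w. g (2 * w + -1)) (1/2) = 2 ^ j * (deriv ^^ j) g 0"
    using higher_deriv_compose_linear'[OF holo, of UNIV "1/2" 2 "-1" j] by simp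
  moreover have "G $ j = (deriv ^^ j) g 0 / fact j"
    using G by (rule fps_nth_fps_expansion)
  ultimately show ?thesis
    by (simp add: contour_integral_unique)
qed

lemma Sstar_eq_fps_nth:
  fixes n :: nat and z1 z2 :: int
  assumes r: "1/2 < r" and exponent: "z1 - z2 + int n + 1 \<le> 0"
  shows "Sstar r m (- int n) z1 z2 =
           (if m = 0 then 0 else 2 powi (- int m)
              * ((1 - fps_X\<^sup>2) ^ n * fps_binomial (of_int (z2 - z1 - 2 * int n - 1 + int m)))
                $ (m - 1))"
proof -
  \<comment> \<open>By \<open>exponent\<close> the integrand contains \<open>w\<close> only through the polynomial \<open>w ^ E\<close>,
    so its only pole is \<open>w = 1/2\<close>.\<close>
  define E where "E = nat (- (z1 - z2 + int n + 1))"
  have E: "z1 - z2 + int n + 1 = - int E"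
    using exponent by (simp add: E_def)
  define g where "g u = (2::complex) powi (1 - 2 * int m) * (1 + u) ^ (E + m) * (1 - u) ^ n"
    for u
  have Sstar_g: "Sstar r m (- int n) z1 z2 = contour_integral (circlepath 0 r)
      (\<lambda>w. g (2 * w + -1) / (w - 1/2) ^ m) / (2 * of_real pi * \<i>)"
    unfolding Sstar_def g_def using Sstar_integrand_eq[OF E] by simp
  show ?thesis
  proof (cases m)
    case 0
    have "((\<lambda>w. g (2 * w + -1)) has_contour_integral 0) (circlepath 0 r)"
      by (rule Cauchy_theorem_disc_simple[of _ 0 "r + 1"])
         (use r in \<open>auto simp: g_def intro!: holomorphic_intros\<close>)
    thus ?thesis
      unfolding Sstar_g using 0 by (simp add: contour_integral_unique)
  next
    case (Suc j)
    define G where "G = (1 + fps_X :: complex fps) ^ (E + m) * (1 - fps_X) ^ n"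
    have "g holomorphic_on UNIV"
      unfolding g_def by (intro holomorphic_intros)
    moreover have "g has_fps_expansion fps_const (2 powi (1 - 2 * int m)) * G"
      unfolding g_def[abs_def] G_def mult.assoc by (intro fps_expansion_intros)
    ultimately have "contour_integral (circlepath 0 r) (\<lambda>w. g (2 * w + -1) / (w - 1/2) ^ m)
        = 2 * pi * \<i> * 2 ^ j * (fps_const (2 powi (1 - 2 * int m)) * G) $ j"
      unfolding Suc by (rule contour_integral_circlepath_eq_fps_nth[OF _ _ r])
    hence "Sstar r m (- int n) z1 z2 = 2 ^ j * 2 powi (1 - 2 * int m) * G $ j"
      unfolding Sstar_g by simp
    also have "(2::complex) ^ j * 2 powi (1 - 2 * int m) = 2 powi (int j + (1 - 2 * int m))"
      by (simp add: power_int_add)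
    also have "int j + (1 - 2 * int m) = - int m"
      using Suc by simp
    also have "G = (1 - fps_X\<^sup>2) ^ n * fps_binomial (of_int (z2 - z1 - 2 * int n - 1 + int m))"
      unfolding G_def using E by (intro fps_one_plus_X_power_times_one_minus_X_power) simp
    finally show ?thesis
      using Suc by simp
  qed
qed

section \<open>Asymptotics of rescaled coefficients\<close>

lemma tendsto_gbinomial_div_power:
  fixes a b :: "'b \<Rightarrow> 'a::{real_normed_field, field_char_0}"
  assumes "((\<lambda>N. a N / b N) \<longlongrightarrow> L) F" and "filterlim b at_infinity F"
  shows "((\<lambda>N. (a N gchoose k) / b N ^ k) \<longlongrightarrow> L ^ k / fact k) F"
proof -
  have factor: "((\<lambda>N. (a N - of_nat i) / b N) \<longlongrightarrow> L) F" for i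
  proof -
    have "((\<lambda>N. a N / b N - of_nat i / b N) \<longlongrightarrow> L - 0) F"
      by (intro tendsto_intros assms tendsto_divide_0[OF tendsto_const])
    thus ?thesis
      by (simp add: diff_divide_distrib)
  qed
  have "((\<lambda>N. (\<Prod>i<k. (a N - of_nat i) / b N) / fact k) \<longlongrightarrow> (\<Prod>i<k. L) / fact k) F"
    by (intro tendsto_intros factor) simp
  moreover have "(\<Prod>i<k. (a N - of_nat i) / b N) / fact k = (a N gchoose k) / b N ^ k" for N
    by (simp add: gbinomial_prod_rev prod_dividef atLeast0LessThan)
  ultimately show ?thesis
    by simp
qed

lemma tendsto_fps_mult_nth_rescaled:
  fixes A B :: "'b \<Rightarrow> 'a::real_normed_field fps" and c :: "'b \<Rightarrow> 'a"
  assumes "\<And>k. ((\<lambda>N. A N $ k / c N ^ k) \<longlongrightarrow> A' $ k) F"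
      and "\<And>k. ((\<lambda>N. B N $ k / c N ^ k) \<longlongrightarrow> B' $ k) F"
  shows "((\<lambda>N. (A N * B N) $ j / c N ^ j) \<longlongrightarrow> (A' * B') $ j) F"
proof -
  \<comment> \<open>This also holds where \<open>c N = 0\<close>, as then both sides vanish (\<open>x / 0 = 0\<close>).\<close>
  have "(A N * B N) $ j / c N ^ j
      = (\<Sum>i=0..j. (A N $ i / c N ^ i) * (B N $ (j - i) / c N ^ (j - i)))" for N
    unfolding fps_mult_nth sum_divide_distrib
    by (intro sum.cong refl) (simp flip: power_add)
  thus ?thesis
    unfolding fps_mult_nth by (simp only:) (intro tendsto_intros assms)
qed

lemma tendsto_fps_nth_one_minus_X2_power_rescaled:
  fixes n :: "'b \<Rightarrow> nat" and \<tau> :: "'b \<Rightarrow> real"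
  assumes \<tau>: "filterlim \<tau> at_top F" and n: "((\<lambda>N. real (n N) / \<tau> N ^ 2) \<longlongrightarrow> a) F"
  shows "((\<lambda>N. ((1 - fps_X\<^sup>2) ^ n N :: complex fps) $ k / of_real (\<tau> N) ^ k)
           \<longlongrightarrow> (fps_exp (- of_real a) oo fps_X\<^sup>2) $ k) F"
proof (cases "even k")
  case True
  then obtain i where k: "k = 2 * i"
    by blast
  have "filterlim (\<lambda>N. \<tau> N ^ 2) at_top F"
    using \<tau> by (intro filterlim_pow_at_top) auto
  hence "filterlim (\<lambda>N. of_real (\<tau> N ^ 2) :: complex) at_infinity F"
    by (rule filterlim_compose[OF filterlim_of_real_at_infinity])
  moreover have "((\<lambda>N. of_nat (n N) / of_real (\<tau> N ^ 2)) \<longlongrightarrow> (of_real a :: complex)) F"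
    using tendsto_of_real[OF n, where 'a=complex] by simp
  ultimately have "((\<lambda>N. (-1) ^ i * ((of_nat (n N) gchoose i) / of_real (\<tau> N ^ 2) ^ i))
                      \<longlongrightarrow> (-1) ^ i * (of_real a ^ i / fact i :: complex)) F"
    by (intro tendsto_intros tendsto_gbinomial_div_power)
  thus ?thesis
    unfolding fps_nth_one_minus_X2_power fps_nth_compose_X_power fps_exp_nth k
    by (simp add: binomial_gbinomial power_mult power_minus')
next
  case False
  thus ?thesis
    by (simp add: fps_nth_one_minus_X2_power fps_nth_compose_X_power)
qed

lemma tendsto_fps_nth_binomial_rescaled:
  fixes q :: "'b \<Rightarrow> int" and \<tau> :: "'b \<Rightarrow> real"
  assumes \<tau>: "filterlim \<tau> at_top F" and q: "((\<lambda>N. real_of_int (q N) / \<tau> N) \<longlongrightarrow> c) F"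
  shows "((\<lambda>N. fps_binomial (of_int (q N) :: complex) $ l / of_real (\<tau> N) ^ l)
           \<longlongrightarrow> fps_exp (of_real c) $ l) F"
proof -
  have "((\<lambda>N. of_int (q N) / of_real (\<tau> N)) \<longlongrightarrow> (of_real c :: complex)) F"
    using tendsto_of_real[OF q, where 'a=complex] by simp
  moreover have "filterlim (\<lambda>N. of_real (\<tau> N) :: complex) at_infinity F"
    by (rule filterlim_compose[OF filterlim_of_real_at_infinity \<tau>])
  ultimately show ?thesis
    unfolding fps_binomial_nth fps_exp_nth of_nat_fact by (rule tendsto_gbinomial_div_power)
qed

lemma tendsto_Sstar_rescaled:
  fixes n :: "'b \<Rightarrow> nat" and z1 z2 :: "'b \<Rightarrow> int" and \<tau> :: "'b \<Rightarrow> real"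
  assumes r: "1/2 < r" and \<tau>: "filterlim \<tau> at_top F"
    and n: "((\<lambda>N. real (n N) / \<tau> N ^ 2) \<longlongrightarrow> a) F"
    and z: "((\<lambda>N. real_of_int (z2 N - z1 N - 2 * int (n N)) / \<tau> N) \<longlongrightarrow> c) F"
    and exponent: "eventually (\<lambda>N. z1 N - z2 N + int (n N) + 1 \<le> 0) F"
  shows "((\<lambda>N. 2 ^ Suc j / of_real (\<tau> N) ^ j * Sstar r (Suc j) (- int (n N)) (z1 N) (z2 N))
           \<longlongrightarrow> ((fps_exp (- of_real a) oo fps_X\<^sup>2) * fps_exp (of_real c)) $ j) F"
proof -
  define q where "q N = z2 N - z1 N - 2 * int (n N) - 1 + int (Suc j)" for N
  have "((\<lambda>N. real_of_int (z2 N - z1 N - 2 * int (n N)) / \<tau> N + real j / \<tau> N)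
      \<longlongrightarrow> c + 0) F"
    by (intro tendsto_intros z tendsto_divide_0[OF tendsto_const]
          filterlim_at_top_imp_at_infinity \<tau>)
  moreover have "real_of_int (z2 N - z1 N - 2 * int (n N)) / \<tau> N + real j / \<tau> N
      = real_of_int (q N) / \<tau> N" for N
    by (simp add: q_def flip: add_divide_distrib)
  ultimately have "((\<lambda>N. real_of_int (q N) / \<tau> N) \<longlongrightarrow> c) F"
    by simp
  hence "((\<lambda>N. ((1 - fps_X\<^sup>2) ^ n N * fps_binomial (of_int (q N)) :: complex fps) $ j
                / of_real (\<tau> N) ^ j)
           \<longlongrightarrow> ((fps_exp (- of_real a) oo fps_X\<^sup>2) * fps_exp (of_real c)) $ j) F"
    by (intro tendsto_fps_mult_nth_rescaled tendsto_fps_nth_one_minus_X2_power_rescaled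
          tendsto_fps_nth_binomial_rescaled \<tau> n)
  moreover have "eventually (\<lambda>N.
        ((1 - fps_X\<^sup>2) ^ n N * fps_binomial (of_int (q N)) :: complex fps) $ j / of_real (\<tau> N) ^ j
      = 2 ^ Suc j / of_real (\<tau> N) ^ j * Sstar r (Suc j) (- int (n N)) (z1 N) (z2 N)) F"
    using exponent
  proof eventually_elim
    case (elim N)
    have "(2::complex) powi (- int (Suc j)) = inverse (2 ^ Suc j)"
      by (simp only: power_int_minus power_int_of_nat)
    thus ?case
      unfolding Sstar_eq_fps_nth[OF r elim] q_def by (simp add: field_simps)
  qed
  ultimately show ?thesis
    by (rule Lim_transform_eventually)
qed

lemma mult_quarter_square_powr_eq:
  fixes \<tau> :: real
  assumes "0 < \<tau>"
  shows "\<tau> * (\<tau>\<^sup>2 / 4) powr (- real (Suc j) / 2) = 2 ^ Suc j / \<tau> ^ j"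
proof -
  define u where "u = \<tau> / 2"
  have u: "0 < u" "\<tau>\<^sup>2 / 4 = u\<^sup>2" "\<tau> = 2 * u"
    using assms by (simp_all add: u_def power_divide)
  have "(\<tau>\<^sup>2 / 4) powr (- real (Suc j) / 2) = (u powr 2) powr (- real (Suc j) / 2)"
    using u by simp
  also have "\<dots> = u powr (2 * (- real (Suc j) / 2))"
    by (rule powr_powr)
  also have "2 * (- real (Suc j) / 2) = - real (Suc j)"
    by simp
  also have "u powr (- real (Suc j)) = inverse (u powr real (Suc j))"
    by (rule powr_minus)
  also have "u powr real (Suc j) = u ^ Suc j"
    using u(1) by (rule powr_realpow)
  finally have "(\<tau>\<^sup>2 / 4) powr (- real (Suc j) / 2) = inverse (u ^ Suc j)" .
  moreover have "2 * u * inverse (u ^ Suc j) = 2 ^ Suc j / (2 * u) ^ j"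
    using u(1) by (simp add: power_mult_distrib divide_inverse)
  ultimately show ?thesis
    unfolding u(3) by simp
qed

lemma tendsto_Sstar_normalized:
  fixes n :: "'b \<Rightarrow> nat" and z1 z2 :: "'b \<Rightarrow> int" and \<tau> :: "'b \<Rightarrow> real"
  assumes r: "1/2 < r" and \<tau>: "filterlim \<tau> at_top F"
    and n: "((\<lambda>N. real (n N) / \<tau> N ^ 2) \<longlongrightarrow> a) F"
    and z: "((\<lambda>N. real_of_int (z2 N - z1 N - 2 * int (n N)) / \<tau> N) \<longlongrightarrow> c) F"
    and exponent: "eventually (\<lambda>N. z1 N - z2 N + int (n N) + 1 \<le> 0) F"
  shows "((\<lambda>N. of_real (\<tau> N * (\<tau> N ^ 2 / 4) powr (- real m / 2))
                 * Sstar r m (- int (n N)) (z1 N) (z2 N))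
           \<longlongrightarrow> (if m = 0 then 0
                else ((fps_exp (- of_real a) oo fps_X\<^sup>2) * fps_exp (of_real c)) $ (m - 1))) F"
proof (cases m)
  case 0
  have "eventually (\<lambda>N. of_real (\<tau> N * (\<tau> N ^ 2 / 4) powr (- real m / 2))
      * Sstar r m (- int (n N)) (z1 N) (z2 N) = 0) F"
    using exponent by eventually_elim (simp add: Sstar_eq_fps_nth[OF r] 0)
  thus ?thesis
    using 0 by (simp add: tendsto_eventually)
next
  case (Suc j)
  have "eventually (\<lambda>N. (2::complex) ^ Suc j / of_real (\<tau> N) ^ j
      = of_real (\<tau> N * (\<tau> N ^ 2 / 4) powr (- real m / 2))) F"
    using \<tau>[unfolded filterlim_at_top_dense, rule_format, of 0]
  proof eventually_elim
    case (elim N)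
    have "\<tau> N * (\<tau> N ^ 2 / 4) powr (- real m / 2) = 2 ^ Suc j / \<tau> N ^ j"
      unfolding Suc using elim by (rule mult_quarter_square_powr_eq)
    thus ?case
      by simp
  qed
  hence "eventually (\<lambda>N. 2 ^ Suc j / of_real (\<tau> N) ^ j * Sstar r (Suc j) (- int (n N)) (z1 N) (z2 N)
      = of_real (\<tau> N * (\<tau> N ^ 2 / 4) powr (- real m / 2)) * Sstar r m (- int (n N)) (z1 N) (z2 N))
      F"
    by eventually_elim (simp only: Suc)
  with tendsto_Sstar_rescaled[OF r \<tau> n z exponent, of j]
  have "((\<lambda>N. of_real (\<tau> N * (\<tau> N ^ 2 / 4) powr (- real m / 2))
               * Sstar r m (- int (n N)) (z1 N) (z2 N))
      \<longlongrightarrow> ((fps_exp (- of_real a) oo fps_X\<^sup>2) * fps_exp (of_real c)) $ j) F"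
    by (rule Lim_transform_eventually)
  thus ?thesis
    using Suc by simp
qed

section \<open>Integrals along two rays\<close>

lemma abs_sin_mult_le_norm_add_cis:
  "\<bar>d * sin \<phi>\<bar> \<le> norm (of_real d + cis \<phi> * of_real u)"
proof -
  have "(norm (of_real d + cis \<phi> * of_real u))\<^sup>2 = (d + u * cos \<phi>)\<^sup>2 + (u * sin \<phi>)\<^sup>2"
    by (simp add: cmod_power2 mult.commute)
  also have "\<dots> = (u + d * cos \<phi>)\<^sup>2 + (d * sin \<phi>)\<^sup>2"
    unfolding power_mult_distrib sin_squared_eq by (simp add: power2_eq_square algebra_simps)
  finally have "(d * sin \<phi>)\<^sup>2 \<le> (norm (of_real d + cis \<phi> * of_real u))\<^sup>2"
    by simp
  thus ?thesis
    by (simp add: abs_le_square_iff[symmetric])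
qed

lemma integrable_on_exp_to_minus_infinity:
  fixes a c :: real
  assumes "0 < a"
  shows "(\<lambda>x. exp (a * x)) integrable_on {..c}"
proof -
  have "(\<lambda>x. exp (- a * x)) absolutely_integrable_on {-c..}"
    using integrable_on_exp_minus_to_infinity[OF assms]
    by (rule nonnegative_absolutely_integrable_1) simp
  hence "(\<lambda>x. exp (- a * - x)) absolutely_integrable_on {..c}"
    using has_absolute_integral_reflect_real[of "{..c}" "{-c..}" "\<lambda>x. exp (- a * x)"] by auto
  thus ?thesis
    by (simp add: absolutely_integrable_on_def)
qed

lemma has_integral_linepath_affine:
  fixes K :: "complex \<Rightarrow> complex"
  assumes ab: "a < b"
    and int: "K contour_integrable_on linepath (p + of_real a * \<omega>) (p + of_real b * \<omega>)"
  shows "((\<lambda>u. K (p + of_real u * \<omega>) * \<omega>) has_integral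
           contour_integral (linepath (p + of_real a * \<omega>) (p + of_real b * \<omega>)) K) {a..b}"
proof -
  define A where "A = p + of_real a * \<omega>"
  define B where "B = p + of_real b * \<omega>"
  define h where "h x = K (linepath A B x) * (B - A)" for x
  have "(h has_integral contour_integral (linepath A B) K) {0..1}"
    using has_contour_integral_integral[OF int[folded A_def B_def]]
    unfolding has_contour_integral_linepath h_def .
  moreover have ends: "(0 - - a / (b - a)) /\<^sub>R (1 / (b - a)) = a"
      "(1 - - a / (b - a)) /\<^sub>R (1 / (b - a)) = b"
    using ab by (auto simp: field_simps)
  ultimately have "((\<lambda>u. h (u / (b - a) - a / (b - a))) has_integral
      (b - a) *\<^sub>R contour_integral (linepath A B) K) {a..b}"
    using has_integral_affinity'[of h _ 0 1 "1 / (b - a)" "- a / (b - a)"] ab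
    unfolding ends box_real(2) by simp
  from has_integral_cmul[OF this, of "1 / (b - a)"]
  have "((\<lambda>u. (1 / (b - a)) *\<^sub>R h (u / (b - a) - a / (b - a))) has_integral
      contour_integral (linepath A B) K) {a..b}"
    using ab by simp
  moreover have "(1 / (b - a)) *\<^sub>R h (u / (b - a) - a / (b - a)) = K (p + of_real u * \<omega>) * \<omega>"
    for u
  proof -
    define t where "t = u / (b - a) - a / (b - a)"
    have BA: "B - A = of_real (b - a) * \<omega>"
      by (simp add: A_def B_def algebra_simps)
    have "linepath A B t = A + of_real t * (B - A)"
      by (simp add: linepath_def scaleR_conv_of_real algebra_simps)
    also have "\<dots> = A + of_real ((b - a) * t) * \<omega>"
      by (simp add: BA mult_ac)
    also have "(b - a) * t = u - a"
      using ab by (simp add: t_def flip: diff_divide_distrib)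
    finally have "linepath A B t = p + of_real u * \<omega>"
      by (simp add: A_def algebra_simps)
    thus ?thesis
      unfolding t_def using ab BA by (simp add: h_def scaleR_conv_of_real)
  qed
  ultimately show ?thesis
    unfolding A_def B_def by simp
qed

lemma tendsto_integral_truncations:
  fixes f :: "real \<Rightarrow> 'a::euclidean_space" and S :: "real set"
  assumes f: "\<And>k. f integrable_on S \<inter> {- real k..real k}"
    and g: "g integrable_on S" and dom: "\<And>u. u \<in> S \<Longrightarrow> norm (f u) \<le> g u"
  shows "(\<lambda>k. integral (S \<inter> {- real k..real k}) f) \<longlonglongrightarrow> integral S f"
proof -
  define f' where "f' k u = (if u \<in> {- real k..real k} then f u else 0)" for k :: nat and u
  have f'_int: "f' k integrable_on S" for k
    using f[of k] unfolding f'_def integrable_restrict_Int by (simp add: Int_commute)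
  have f'_integral: "integral S (f' k) = integral (S \<inter> {- real k..real k}) f" for k
    unfolding f'_def integral_restrict_Int by (simp add: Int_commute)
  have f'_dom: "norm (f' k u) \<le> g u" if "u \<in> S" for k u
    using dom[OF that] norm_ge_zero[of "f u"] unfolding f'_def by (auto simp del: norm_ge_zero)
  have f'_lim: "(\<lambda>k. f' k u) \<longlonglongrightarrow> f u" for u
  proof (rule tendsto_eventually)
    obtain k0 :: nat where k0: "\<bar>u\<bar> \<le> real k0"
      using real_arch_simple by blast
    show "eventually (\<lambda>k. f' k u = f u) sequentially"
      using eventually_ge_at_top[of k0] by eventually_elim (use k0 in \<open>auto simp: f'_def\<close>)
  qed
  have "(\<lambda>k. integral S (f' k)) \<longlonglongrightarrow> integral S f"
    by (rule dominated_convergence(2)[OF f'_int g f'_dom]) (auto intro: f'_lim)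
  thus ?thesis
    unfolding f'_integral .
qed

lemma zero_in_interior_sector_triangle:
  fixes \<theta> d R :: real
  assumes \<theta>: "0 < \<theta>" "\<theta> < pi / 2" and d: "0 < d" and R: "d < R * cos \<theta>"
  shows "0 \<in> interior (convex hull
           {of_real d - cis \<theta> * of_real R, of_real d, of_real d - cis (- \<theta>) * of_real R})"
proof -
  define A where "A = of_real d - cis \<theta> * of_real R"
  define B where "B = of_real d - cis (- \<theta>) * of_real R"
  have cos: "0 < cos \<theta>" and sin: "0 < sin \<theta>"
    using \<theta> by (auto intro: cos_gt_zero sin_gt_zero)
  have "0 < R * cos \<theta>"
    using d R by linarith
  hence R0: "0 < R"
    using cos by (simp add: zero_less_mult_iff)
  define w where "w = d / (2 * R * cos \<theta>)"
  have w: "0 \<le> w" "w \<le> 1 / 2" "2 * w * R * cos \<theta> = d"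
    using d R0 R cos by (auto simp: w_def field_simps)
  have "0 = w *\<^sub>R A + (1 - 2 * w) *\<^sub>R complex_of_real d + w *\<^sub>R B"
    using w(3) by (simp add: complex_eq_iff A_def B_def algebra_simps)
  hence "0 \<in> convex hull {A, of_real d, B}"
    unfolding convex_hull_3 using w by force
  moreover have "0 \<notin> closed_segment A (of_real d)" "0 \<notin> closed_segment (of_real d) B"
      "0 \<notin> closed_segment B A"
    using d R sin R0 by (auto simp: in_segment complex_eq_iff A_def B_def algebra_simps)
  ultimately show ?thesis
    unfolding A_def B_def by (simp add: interior_of_triangle)
qed

lemma triangle_contour_integral_eq_residue:
  fixes K :: "complex \<Rightarrow> complex"
  assumes holo: "K holomorphic_on - {0}"
    and inside: "0 \<in> interior (convex hull {a, b, c})" and orient: "0 < Im ((b - a) * cnj b)"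
  shows "contour_integral (linepath a b +++ linepath b c +++ linepath c a) K
           = 2 * pi * \<i> * residue K 0"
proof -
  define \<gamma> where "\<gamma> = linepath a b +++ linepath b c +++ linepath c a"
  have "0 \<notin> closed_segment a b \<union> closed_segment b c \<union> closed_segment c a"
    using inside interior_of_triangle[of a b c] by simp
  hence "path_image \<gamma> \<subseteq> - {0}"
    by (auto simp: \<gamma>_def path_image_join)
  moreover have winding: "winding_number \<gamma> 0 = 1"
    using winding_number_triangle[OF inside] orient by (simp add: \<gamma>_def)
  ultimately have "contour_integral \<gamma> K
      = 2 * pi * \<i> * (\<Sum>p\<in>{0}. winding_number \<gamma> p * residue K p)"
    using holo by (intro Residue_theorem[where S = UNIV]) (auto simp: \<gamma>_def Compl_eq_Diff_UNIV)
  thus ?thesis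
    using winding by (simp add: \<gamma>_def)
qed

lemma two_segment_integral_eq_residue_minus_chord:
  fixes K :: "complex \<Rightarrow> complex" and \<theta> d R :: real
  assumes holo: "K holomorphic_on - {0}" and \<theta>: "0 < \<theta>" "\<theta> < pi / 2" and d: "0 < d"
    and R: "d < R * cos \<theta>"
  defines "A \<equiv> of_real d - cis \<theta> * of_real R" and "B \<equiv> of_real d - cis (- \<theta>) * of_real R"
  shows "integral {- R..0} (\<lambda>u. K (of_real d + cis \<theta> * of_real u) * cis \<theta>)
         + integral {0..R} (\<lambda>u. K (of_real d - cis (- \<theta>) * of_real u) * (- cis (- \<theta>)))
         = 2 * pi * \<i> * residue K 0 - contour_integral (linepath B A) K"
proof -
  have sin: "0 < sin \<theta>"
    using \<theta> by (intro sin_gt_zero) auto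
  have "0 < R * cos \<theta>" "0 < cos \<theta>"
    using \<theta> d R by (auto intro: cos_gt_zero)
  hence R0: "0 < R"
    by (simp add: zero_less_mult_iff)
  note inside = zero_in_interior_sector_triangle[OF \<theta> d R, folded A_def B_def]
  have "0 \<notin> closed_segment A (of_real d)" "0 \<notin> closed_segment (of_real d) B"
       "0 \<notin> closed_segment B A"
    using inside interior_of_triangle[of A "of_real d" B] by auto
  hence integrable: "K contour_integrable_on linepath A (of_real d)"
      "K contour_integrable_on linepath (of_real d) B" "K contour_integrable_on linepath B A"
    by (auto intro!: contour_integrable_continuous_linepath holomorphic_on_imp_continuous_on
             holomorphic_on_subset[OF holo])
  have "((\<lambda>u. K (of_real d + cis \<theta> * of_real u) * cis \<theta>) has_integral
          contour_integral (linepath A (of_real d)) K) {- R..0}"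
    using has_integral_linepath_affine[of "- R" 0 K "of_real d" "cis \<theta>"] integrable(1) R0
    by (simp add: A_def mult.commute)
  hence left: "integral {- R..0} (\<lambda>u. K (of_real d + cis \<theta> * of_real u) * cis \<theta>)
      = contour_integral (linepath A (of_real d)) K"
    by (rule integral_unique)
  have "((\<lambda>u. K (of_real d - cis (- \<theta>) * of_real u) * (- cis (- \<theta>))) has_integral
          contour_integral (linepath (of_real d) B) K) {0..R}"
    using has_integral_linepath_affine[of 0 R K "of_real d" "- cis (- \<theta>)"] integrable(2) R0
    by (simp add: B_def mult.commute)
  hence right: "integral {0..R} (\<lambda>u. K (of_real d - cis (- \<theta>) * of_real u) * (- cis (- \<theta>)))
      = contour_integral (linepath (of_real d) B) K"
    by (rule integral_unique)
  have "contour_integral (linepath A (of_real d) +++ linepath (of_real d) B +++ linepath B A) K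
      = 2 * pi * \<i> * residue K 0"
    using holo inside R0 d sin by (intro triangle_contour_integral_eq_residue) (auto simp: A_def)
  moreover have "contour_integral (linepath A (of_real d) +++ linepath (of_real d) B
        +++ linepath B A) K
      = contour_integral (linepath A (of_real d)) K + contour_integral (linepath (of_real d) B) K
        + contour_integral (linepath B A) K"
    using integrable by (simp add: contour_integrable_joinI add.assoc)
  ultimately show ?thesis
    unfolding left right by (simp add: algebra_simps)
qed

lemma chord_contour_integral_bound:
  fixes K :: "complex \<Rightarrow> complex" and \<theta> d R C :: real
  assumes holo: "K holomorphic_on - {0}" and \<theta>: "0 < \<theta>" "\<theta> < pi / 2" and d: "0 < d"
    and R: "2 * d \<le> R * cos \<theta>"
    and bound: "\<And>z. \<bar>Im z\<bar> \<le> (d - Re z) * tan \<theta> \<Longrightarrow> d * sin \<theta> \<le> norm z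
                  \<Longrightarrow> norm (K z) \<le> C * exp (Re z)"
  shows "norm (contour_integral
             (linepath (of_real d - cis (- \<theta>) * of_real R) (of_real d - cis \<theta> * of_real R)) K)
           \<le> C * exp (d - R * cos \<theta>) * (2 * R)"
proof -
  define A where "A = of_real d - cis \<theta> * of_real R"
  define B where "B = of_real d - cis (- \<theta>) * of_real R"
  have cos: "0 < cos \<theta>" and sin: "0 < sin \<theta>"
    using \<theta> by (auto intro: cos_gt_zero sin_gt_zero)
  have "0 < R * cos \<theta>"
    using d R by linarith
  hence R0: "0 < R"
    using cos by (simp add: zero_less_mult_iff)
  have chord: "Re z = d - R * cos \<theta> \<and> \<bar>Im z\<bar> \<le> R * sin \<theta>"
    if z: "z \<in> closed_segment B A" for z
  proof -
    obtain t where t: "0 \<le> t" "t \<le> 1" "z = (1 - t) *\<^sub>R B + t *\<^sub>R A"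
      using z unfolding in_segment by blast
    have "Im z = (1 - 2 * t) * (R * sin \<theta>)"
      by (simp add: t(3) A_def B_def algebra_simps)
    hence "\<bar>Im z\<bar> = \<bar>1 - 2 * t\<bar> * (R * sin \<theta>)"
      using R0 sin by (simp add: abs_mult)
    also have "\<dots> \<le> R * sin \<theta>"
      using t R0 sin by (intro mult_left_le_one_le) auto
    finally show ?thesis
      by (simp add: t(3) A_def B_def algebra_simps)
  qed
  have on_chord: "norm (K z) \<le> C * exp (d - R * cos \<theta>)" if z: "z \<in> closed_segment B A" for z
  proof -
    have re: "Re z = d - R * cos \<theta>" and im: "\<bar>Im z\<bar> \<le> R * sin \<theta>"
      using chord[OF z] by auto
    have "\<bar>Im z\<bar> \<le> (d - Re z) * tan \<theta>"
      using im cos by (simp add: re tan_def)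
    moreover have "d * sin \<theta> \<le> norm z"
    proof -
      have "d * sin \<theta> \<le> d"
        using mult_left_le[OF sin_le_one] d by simp
      moreover have "R * cos \<theta> - d \<le> norm z"
        using abs_Re_le_cmod[of z] re d R by simp
      ultimately show ?thesis
        using R by linarith
    qed
    ultimately show ?thesis
      using bound[of z] re by simp
  qed
  have "0 \<notin> closed_segment B A"
    using chord[of 0] d R by fastforce
  hence "K contour_integrable_on linepath B A"
    by (intro contour_integrable_continuous_linepath holomorphic_on_imp_continuous_on
          holomorphic_on_subset[OF holo]) auto
  moreover have nonneg: "0 \<le> C * exp (d - R * cos \<theta>)"
    using on_chord[of B] norm_ge_zero order_trans by blast
  ultimately have "norm (contour_integral (linepath B A) K)
      \<le> C * exp (d - R * cos \<theta>) * norm (A - B)"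
    using has_contour_integral_bound_linepath has_contour_integral_integral on_chord by blast
  moreover have "norm (A - B) \<le> 2 * R"
    using norm_triangle_ineq4[of "cis (- \<theta>) * of_real R" "cis \<theta> * of_real R"] R0
    by (simp add: A_def B_def norm_mult)
  ultimately show ?thesis
    unfolding A_def B_def using nonneg by (meson mult_left_mono order_trans)
qed

lemma tendsto_ray_integral_truncations:
  fixes K :: "complex \<Rightarrow> complex" and \<theta> d C :: real
  assumes holo: "K holomorphic_on - {0}" and \<theta>: "0 < \<theta>" "\<theta> < pi / 2" and d: "0 < d"
    and bound: "\<And>z. \<bar>Im z\<bar> \<le> (d - Re z) * tan \<theta> \<Longrightarrow> d * sin \<theta> \<le> norm z
                  \<Longrightarrow> norm (K z) \<le> C * exp (Re z)"
  defines "left \<equiv> \<lambda>u. K (of_real d + cis \<theta> * of_real u) * cis \<theta>"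
    and "right \<equiv> \<lambda>u. K (of_real d - cis (- \<theta>) * of_real u) * (- cis (- \<theta>))"
  shows "(\<lambda>k. integral {- real k..0} left) \<longlonglongrightarrow> integral {..0} left"
    and "(\<lambda>k. integral {0..real k} right) \<longlonglongrightarrow> integral {0..} right"
proof -
  have cos: "0 < cos \<theta>" and sin: "0 < sin \<theta>"
    using \<theta> by (auto intro: cos_gt_zero sin_gt_zero)
  have tan: "cos \<theta> * tan \<theta> = sin \<theta>"
    using cos by (simp add: tan_def)
  have ray_norm: "d * sin \<theta> \<le> norm (of_real d + cis \<theta> * of_real u)"
      "d * sin \<theta> \<le> norm (of_real d - cis (- \<theta>) * of_real u)" for u
    using abs_sin_mult_le_norm_add_cis[of d \<theta> u] abs_sin_mult_le_norm_add_cis[of d "- \<theta>" "- u"]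
    by simp_all
  have ray_nonzero: "of_real d + cis \<theta> * of_real u \<noteq> 0"
      "of_real d - cis (- \<theta>) * of_real u \<noteq> 0" for u
    using ray_norm[of u] mult_pos_pos[OF d sin] by auto
  have "continuous_on UNIV left" "continuous_on UNIV right"
    unfolding left_def right_def
    by (intro continuous_intros continuous_on_compose2[OF holomorphic_on_imp_continuous_on[OF holo]];
        use ray_nonzero in force)+
  hence integrable: "left integrable_on {a..b}" "right integrable_on {a..b}" for a b
    by (auto intro: integrable_continuous_real continuous_on_subset)
  have "norm (left u) \<le> C * exp d * exp (cos \<theta> * u)" if "u \<in> {..0}" for u
    using bound[OF _ ray_norm(1)] that tan sin
    by (simp add: left_def norm_mult exp_add mult_ac abs_mult)
  moreover have "(\<lambda>u. C * exp d * exp (cos \<theta> * u)) integrable_on {..0}"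
    using integrable_cmul[OF integrable_on_exp_to_minus_infinity[OF cos, of 0], of "C * exp d"]
    by simp
  ultimately have "(\<lambda>k. integral ({..0} \<inter> {- real k..real k}) left) \<longlonglongrightarrow> integral {..0} left"
    using integrable by (intro tendsto_integral_truncations) auto
  moreover have "{..0} \<inter> {- real k..real k} = {- real k..0}" for k
    by auto
  ultimately show "(\<lambda>k. integral {- real k..0} left) \<longlonglongrightarrow> integral {..0} left"
    by simp
  have "norm (right u) \<le> C * exp d * exp (- cos \<theta> * u)" if "u \<in> {0..}" for u
    using bound[OF _ ray_norm(2)] that tan sin
    by (simp add: right_def norm_mult mult_ac abs_mult flip: exp_add)
  moreover have "(\<lambda>u. C * exp d * exp (- cos \<theta> * u)) integrable_on {0..}"
    using integrable_cmul[OF integrable_on_exp_minus_to_infinity[OF cos, of 0], of "C * exp d"]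
    by simp
  ultimately have "(\<lambda>k. integral ({0..} \<inter> {- real k..real k}) right) \<longlonglongrightarrow> integral {0..} right"
    using integrable by (intro tendsto_integral_truncations) auto
  moreover have "{0..} \<inter> {- real k..real k} = {0..real k}" for k
    by auto
  ultimately show "(\<lambda>k. integral {0..real k} right) \<longlonglongrightarrow> integral {0..} right"
    by simp
qed

lemma two_ray_integral_eq_residue:
  fixes K :: "complex \<Rightarrow> complex" and \<theta> d C :: real
  assumes holo: "K holomorphic_on - {0}" and \<theta>: "0 < \<theta>" "\<theta> < pi / 2" and d: "0 < d"
    and bound: "\<And>z. \<bar>Im z\<bar> \<le> (d - Re z) * tan \<theta> \<Longrightarrow> d * sin \<theta> \<le> norm z
                  \<Longrightarrow> norm (K z) \<le> C * exp (Re z)"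
  shows "integral {..0} (\<lambda>u. K (of_real d + cis \<theta> * of_real u) * cis \<theta>)
         + integral {0..} (\<lambda>u. K (of_real d - cis (- \<theta>) * of_real u) * (- cis (- \<theta>)))
         = 2 * pi * \<i> * residue K 0"
proof -
  \<comment> \<open>Truncate both rays at length \<open>k\<close> and close them by a chord; the triangle contains \<open>0\<close>,
    and the chord integral is \<open>O(k exp (- k cos \<theta>))\<close>.\<close>
  define left where "left u = K (of_real d + cis \<theta> * of_real u) * cis \<theta>" for u
  define right where "right u = K (of_real d - cis (- \<theta>) * of_real u) * (- cis (- \<theta>))" for u
  define chord where "chord k = contour_integral (linepath (of_real d - cis (- \<theta>) * of_real (real k))
      (of_real d - cis \<theta> * of_real (real k))) K" for k
  have cos: "0 < cos \<theta>"
    using \<theta> by (intro cos_gt_zero) auto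
  have large: "eventually (\<lambda>k. 2 * d \<le> real k * cos \<theta>) sequentially"
    using cos by real_asymp
  have "chord \<longlonglongrightarrow> 0"
  proof (rule Lim_null_comparison)
    show "eventually (\<lambda>k. norm (chord k) \<le> C * exp (d - real k * cos \<theta>) * (2 * real k))
        sequentially"
      using large
      by eventually_elim (unfold chord_def, rule chord_contour_integral_bound[OF holo \<theta> d _ bound])
    show "(\<lambda>k. C * exp (d - real k * cos \<theta>) * (2 * real k)) \<longlonglongrightarrow> 0"
      using cos by real_asymp
  qed
  hence "(\<lambda>k. 2 * pi * \<i> * residue K 0 - chord k) \<longlonglongrightarrow> 2 * pi * \<i> * residue K 0"
    by (auto intro!: tendsto_eq_intros)
  moreover have "eventually (\<lambda>k. 2 * pi * \<i> * residue K 0 - chord k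
      = integral {- real k..0} left + integral {0..real k} right) sequentially"
    using large
  proof eventually_elim
    case (elim k)
    thus ?case
      unfolding left_def right_def chord_def using d
      by (intro two_segment_integral_eq_residue_minus_chord[OF holo \<theta> d, symmetric]) linarith
  qed
  ultimately have "(\<lambda>k. integral {- real k..0} left + integral {0..real k} right)
      \<longlonglongrightarrow> 2 * pi * \<i> * residue K 0"
    by (rule Lim_transform_eventually)
  moreover have "(\<lambda>k. integral {- real k..0} left + integral {0..real k} right)
      \<longlonglongrightarrow> integral {..0} left + integral {0..} right"
    unfolding left_def right_def
    by (intro tendsto_add tendsto_ray_integral_truncations[OF holo \<theta> d bound])
  ultimately show ?thesis
    unfolding left_def right_def using LIMSEQ_unique by blast
qed

section \<open>The Gaussian kernel\<close>

lemma Re_gaussian_exponent_bound: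
  fixes t \<tau> c d :: real
  assumes t: "t < 0" and \<tau>: "0 \<le> \<tau>" "\<tau> < 1"
  obtains C where "\<And>z. (Im z)\<^sup>2 \<le> \<tau> * (d - Re z)\<^sup>2
                     \<Longrightarrow> Re (of_real t / 2 * z\<^sup>2 + of_real c * z) \<le> C + Re z"
proof -
  define \<alpha> where "\<alpha> = - t * (1 - \<tau>) / 2"
  define \<beta> where "\<beta> = t * \<tau> * d + c - 1"
  have \<alpha>: "0 < \<alpha>"
    using t \<tau> by (simp add: \<alpha>_def mult_neg_pos)
  show thesis
  proof (rule that)
    fix z :: complex
    assume sector: "(Im z)\<^sup>2 \<le> \<tau> * (d - Re z)\<^sup>2"
    have "Re (of_real t / 2 * z\<^sup>2 + of_real c * z) = t / 2 * ((Re z)\<^sup>2 - (Im z)\<^sup>2) + c * Re z"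
      by (simp add: power2_eq_square)
    also have "\<dots> \<le> t / 2 * ((Re z)\<^sup>2 - \<tau> * (d - Re z)\<^sup>2) + c * Re z"
      using sector t by (simp add: mult_left_mono_neg)
    also have "\<dots> = - \<alpha> * (Re z)\<^sup>2 + \<beta> * Re z - t * \<tau> * d\<^sup>2 / 2 + Re z"
      by (simp add: \<alpha>_def \<beta>_def power2_eq_square field_simps)
    also have "- \<alpha> * (Re z)\<^sup>2 + \<beta> * Re z \<le> \<beta>\<^sup>2 / (4 * \<alpha>)"
    proof -
      have "0 \<le> (2 * \<alpha> * Re z - \<beta>)\<^sup>2 / (4 * \<alpha>)"
        using \<alpha> by simp
      also have "\<dots> = \<beta>\<^sup>2 / (4 * \<alpha>) - (- \<alpha> * (Re z)\<^sup>2 + \<beta> * Re z)"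
        using \<alpha> by (simp add: field_simps power2_eq_square)
      finally show ?thesis
        by simp
    qed
    finally show "Re (of_real t / 2 * z\<^sup>2 + of_real c * z)
        \<le> (\<beta>\<^sup>2 / (4 * \<alpha>) - t * \<tau> * d\<^sup>2 / 2) + Re z"
      by simp
  qed
qed

lemma Skernel_sector_bound:
  fixes t \<theta> d \<delta> :: real
  assumes t: "t < 0" and \<theta>: "0 < \<theta>" "\<theta> < pi / 4" and \<delta>: "0 < \<delta>"
  obtains C where "\<And>z. \<bar>Im z\<bar> \<le> (d - Re z) * tan \<theta> \<Longrightarrow> \<delta> \<le> norm z
                     \<Longrightarrow> norm (Skernel (- int m) t x y z) \<le> C * exp (Re z)"
proof -
  have "0 < tan \<theta>"
    using \<theta> by (intro tan_gt_zero) auto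
  moreover have "tan \<theta> < tan (pi / 4)"
    using \<theta> by (intro tan_monotone) auto
  ultimately have tan: "0 < tan \<theta>" "(tan \<theta>)\<^sup>2 < 1"
    by (simp_all add: power_less_one_iff tan_45)
  obtain C where C: "\<And>z. (Im z)\<^sup>2 \<le> (tan \<theta>)\<^sup>2 * (d - Re z)\<^sup>2
      \<Longrightarrow> Re (of_real t / 2 * z\<^sup>2 + of_real (x - y) * z) \<le> C + Re z"
    using Re_gaussian_exponent_bound[OF t _ tan(2)] by auto
  show thesis
  proof (rule that[of "exp C / \<delta> ^ m"])
    fix z :: complex
    assume sector: "\<bar>Im z\<bar> \<le> (d - Re z) * tan \<theta>" and z: "\<delta> \<le> norm z"
    have "(Im z)\<^sup>2 \<le> ((d - Re z) * tan \<theta>)\<^sup>2"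
      using sector by (simp add: abs_le_square_iff[symmetric])
    hence gaussian: "exp (Re (of_real t / 2 * z\<^sup>2 + of_real (x - y) * z)) \<le> exp C * exp (Re z)"
      using C[of z] by (simp add: power_mult_distrib mult.commute flip: exp_add)
    have "norm (z powi (- int m)) = 1 / norm z ^ m"
      by (simp add: power_int_minus norm_inverse norm_power divide_inverse)
    also have "\<dots> \<le> 1 / \<delta> ^ m"
      using z \<delta> by (intro divide_left_mono power_mono mult_pos_pos zero_less_power) auto
    finally have "norm (Skernel (- int m) t x y z) \<le> exp C * exp (Re z) * (1 / \<delta> ^ m)"
      using gaussian unfolding Skernel_def norm_mult norm_exp_eq_Re by (intro mult_mono) auto
    thus "norm (Skernel (- int m) t x y z) \<le> exp C / \<delta> ^ m * exp (Re z)"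
      by simp
  qed
qed

lemma Scont_eq_residue:
  assumes t: "t < 0" and \<theta>: "0 < \<theta>" "\<theta> < pi / 4" and d: "0 < d"
  shows "Scont \<theta> d (- int m) t x y = residue (Skernel (- int m) t x y) 0"
proof -
  have "0 < d * sin \<theta>"
    using \<theta> d by (simp add: sin_gt_zero)
  then obtain C where C: "\<And>z. \<bar>Im z\<bar> \<le> (d - Re z) * tan \<theta> \<Longrightarrow> d * sin \<theta> \<le> norm z
      \<Longrightarrow> norm (Skernel (- int m) t x y z) \<le> C * exp (Re z)"
    using Skernel_sector_bound[OF t \<theta>] by blast
  have "Skernel (- int m) t x y holomorphic_on - {0}"
    unfolding Skernel_def by (intro holomorphic_intros) auto
  from two_ray_integral_eq_residue[OF this _ _ d C] \<theta>
  show ?thesis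
    unfolding Scont_def by simp
qed

lemma residue_Skernel:
  "residue (Skernel (- int m) t x y) 0 =
     (if m = 0 then 0
      else ((fps_exp (of_real t / 2) oo fps_X\<^sup>2) * fps_exp (of_real (x - y))) $ (m - 1))"
proof (cases m)
  case 0
  have "Skernel 0 t x y holomorphic_on UNIV"
    unfolding Skernel_def by (intro holomorphic_intros) auto
  with 0 show ?thesis
    using residue_holo[OF open_UNIV UNIV_I] by simp
next
  case (Suc j)
  define f where "f z = exp (of_real t / 2 * z\<^sup>2) * exp (of_real (x - y) * z)" for z :: complex
  have "((\<lambda>z. exp (of_real t / 2 * z)) \<circ> (\<lambda>z::complex. z\<^sup>2))
      has_fps_expansion (fps_exp (of_real t / 2) oo fps_X\<^sup>2)"
    by (intro has_fps_expansion_compose fps_expansion_intros) simp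
  hence "f has_fps_expansion (fps_exp (of_real t / 2) oo fps_X\<^sup>2) * fps_exp (of_real (x - y))"
    unfolding f_def[abs_def] by (intro fps_expansion_intros) (simp add: o_def)
  note residue = residue_fps_expansion_over_power_at_0[OF this, of j]
  have "Skernel (- int m) t x y = (\<lambda>z. f z / z ^ Suc j)"
  proof
    fix z :: complex
    have powi: "z powi (- int m) = inverse (z ^ Suc j)"
      unfolding Suc by (simp only: power_int_minus power_int_of_nat)
    show "Skernel (- int m) t x y z = f z / z ^ Suc j"
      unfolding Skernel_def f_def powi exp_add[symmetric] divide_inverse ..
  qed
  thus ?thesis
    using residue Suc by simp
qed

section \<open>The rounded parameters\<close>

lemma tendsto_divide_of_bounded_diff:
  fixes a b :: "'b \<Rightarrow> real"
  assumes b: "filterlim b at_top F" and bound: "eventually (\<lambda>N. \<bar>a N - L * b N\<bar> \<le> C) F"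
  shows "((\<lambda>N. a N / b N) \<longlongrightarrow> L) F"
proof (rule LIM_zero_cancel, rule Lim_null_comparison)
  show "((\<lambda>N. C / b N) \<longlongrightarrow> 0) F"
    by (intro tendsto_divide_0[OF tendsto_const] filterlim_at_top_imp_at_infinity b)
  show "eventually (\<lambda>N. norm (a N / b N - L) \<le> C / b N) F"
    using bound b[unfolded filterlim_at_top_dense, rule_format, of 0]
  proof eventually_elim
    case (elim N)
    hence "a N / b N - L = (a N - L * b N) / b N"
      by (simp add: field_simps)
    thus ?case
      using elim by (simp add: divide_right_mono)
  qed
qed

lemma floor_parameters_asymptotics:
  fixes s x y :: real
  assumes s: "0 < s"
  defines "\<tau> \<equiv> \<lambda>N::nat. sqrt (2 * real N)" and "n \<equiv> \<lambda>N::nat. nat \<lfloor>real N * s\<rfloor>"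
    and "z1 \<equiv> \<lambda>N::nat. \<lfloor>- 2 * real N * s - x * sqrt (2 * real N)\<rfloor>"
    and "z2 \<equiv> \<lambda>N::nat. \<lfloor>- sqrt (2 * real N) * y\<rfloor>"
  shows "((\<lambda>N. real (n N) / \<tau> N ^ 2) \<longlongrightarrow> s / 2) sequentially"
    and "((\<lambda>N. real_of_int (z2 N - z1 N - 2 * int (n N)) / \<tau> N) \<longlongrightarrow> x - y) sequentially"
    and "eventually (\<lambda>N. z1 N - z2 N + int (n N) + 1 \<le> 0) sequentially"
proof -
  have n_eq: "real (n N) = \<lfloor>real N * s\<rfloor>" for N
    using s by (simp add: n_def)
  have n: "real N * s - 1 < real (n N)" "real (n N) \<le> real N * s" for N
    unfolding n_eq by linarith+
  have z1: "- 2 * real N * s - x * \<tau> N - 1 < z1 N" "z1 N \<le> - 2 * real N * s - x * \<tau> N" for N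
    unfolding z1_def \<tau>_def by linarith+
  have z2: "- \<tau> N * y - 1 < z2 N" "z2 N \<le> - \<tau> N * y" for N
    unfolding z2_def \<tau>_def by linarith+
  show "((\<lambda>N. real (n N) / \<tau> N ^ 2) \<longlongrightarrow> s / 2) sequentially"
  proof (rule tendsto_divide_of_bounded_diff)
    show "filterlim (\<lambda>N. \<tau> N ^ 2) at_top sequentially"
      unfolding \<tau>_def by real_asymp
    show "eventually (\<lambda>N. \<bar>real (n N) - s / 2 * \<tau> N ^ 2\<bar> \<le> 1) sequentially"
    proof (intro always_eventually allI)
      fix N
      have "s / 2 * \<tau> N ^ 2 = real N * s"
        by (simp add: \<tau>_def)
      thus "\<bar>real (n N) - s / 2 * \<tau> N ^ 2\<bar> \<le> 1"
        using n[of N] by (simp only: abs_le_iff) linarith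
    qed
  qed
  show "((\<lambda>N. real_of_int (z2 N - z1 N - 2 * int (n N)) / \<tau> N) \<longlongrightarrow> x - y) sequentially"
  proof (rule tendsto_divide_of_bounded_diff)
    show "filterlim \<tau> at_top sequentially"
      unfolding \<tau>_def by real_asymp
    show "eventually (\<lambda>N. \<bar>real_of_int (z2 N - z1 N - 2 * int (n N)) - (x - y) * \<tau> N\<bar> \<le> 3)
        sequentially"
    proof (intro always_eventually allI)
      fix N
      show "\<bar>real_of_int (z2 N - z1 N - 2 * int (n N)) - (x - y) * \<tau> N\<bar> \<le> 3"
        using n[of N] z1[of N] z2[of N] by (simp add: abs_le_iff algebra_simps)
    qed
  qed
  have "eventually (\<lambda>N. 2 - real N * s - (x - y) * \<tau> N \<le> 0) sequentially"
    unfolding \<tau>_def using s by real_asymp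
  thus "eventually (\<lambda>N. z1 N - z2 N + int (n N) + 1 \<le> 0) sequentially"
  proof eventually_elim
    case (elim N)
    have "real_of_int (z1 N - z2 N + int (n N) + 1) \<le> 0"
      using elim n(2)[of N] z1(2)[of N] z2(1)[of N] by (simp add: algebra_simps)
    thus ?case
      by linarith
  qed
qed

theorem lemma2:
  fixes m :: nat and s x y r \<theta> d :: real
  assumes "0 < s" "s \<le> 1" "1/2 < r" "r < 1" "0 < \<theta>" "\<theta> < pi/4" "0 < d"
  shows "((\<lambda>N::nat. complex_of_real (sqrt (2 * real N) * (real N / 2) powr (- real m / 2))
            * Sstar r m (- \<lfloor>real N * s\<rfloor>)
                (\<lfloor>- 2 * real N * s - x * sqrt (2 * real N)\<rfloor>) (\<lfloor>- sqrt (2 * real N) * y\<rfloor>))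
          \<longlongrightarrow> Scont \<theta> d (- int m) (- s) x y) sequentially"
proof -
  define n where "n N = nat \<lfloor>real N * s\<rfloor>" for N :: nat
  have floor: "\<lfloor>real N * s\<rfloor> = int (n N)" for N
    using \<open>0 < s\<close> by (simp add: n_def)
  have scale: "sqrt (2 * real N) ^ 2 / 4 = real N / 2" for N :: nat
    by simp
  have limit: "Scont \<theta> d (- int m) (- s) x y = (if m = 0 then 0
      else ((fps_exp (- of_real (s / 2)) oo fps_X\<^sup>2) * fps_exp (of_real (x - y))) $ (m - 1))"
    using assms by (simp add: Scont_eq_residue residue_Skernel)
  have "filterlim (\<lambda>N::nat. sqrt (2 * real N)) at_top sequentially"
    by real_asymp
  from tendsto_Sstar_normalized[OF \<open>1/2 < r\<close> this
      floor_parameters_asymptotics(1)[OF \<open>0 < s\<close>, folded n_def]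
      floor_parameters_asymptotics(2,3)[OF \<open>0 < s\<close>, where x = x and y = y, folded n_def], of m]
  show ?thesis
    unfolding scale floor limit .
qed

end
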